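(* Let $H_{KR}=[I_{10}\ M_{KR}]$ be the $10\times51$ binary matrix whose last 41 columns are, in order, the hexadecimal columns 1B6, 193, 1CC, 187, 1F6, F7, 16E, 140, 3C, 296, 22F, 303, 381, 365, 11D, 1A3, 274, 2F2, 254, 56, F, 41, 357, 208, 34, 329, 28D, 31D, 3D5, 129, 3D7, B7, 3EC, 2E2, 23C, AD, 34E, 155, 2E6, 371, D4 (10-bit binary, most significant bit on top). Then every vector of $\mathbb{F}_2^{10}$ equals the sum of three (distinct) columns of $H_{KR}$.
   Context: $I_{10}$ denotes the $10\times10$ identity matrix whose leftmost column is $(1,0,\dots,0)^T$. *)

theory Defs
  imports Main "HOL-Library.Z2"
begin

definition MKR_hex :: "nat list" where
  "MKR_hex = [0x1B6, 0x193, 0x1CC, 0x187, 0x1F6, 0xF7, 0x16E, 0x140, 0x3C, 0x296,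
              0x22F, 0x303, 0x381, 0x365, 0x11D, 0x1A3, 0x274, 0x2F2, 0x254, 0x56,
              0xF, 0x41, 0x357, 0x208, 0x34, 0x329, 0x28D, 0x31D, 0x3D5, 0x129,
              0x3D7, 0xB7, 0x3EC, 0x2E2, 0x23C, 0xAD, 0x34E, 0x155, 0x2E6, 0x371, 0xD4]"

text \<open>Entry of H_KR = [I_10 M_KR] over F_2 (type bit) in row i (0-based, 0 = top row,
  i < 10) and column j (0-based, j < 51). Row i of a hex column h is binary digit 9 - i of h.\<close>
definition H_KR :: "nat \<Rightarrow> nat \<Rightarrow> bit" where
  "H_KR i j = (if j < 10 then (if i = j then 1 else 0)
               else of_nat ((MKR_hex ! (j - 10) div 2 ^ (9 - i)) mod 2))"

end

theory Submission
  imports Defs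
begin

unbundle bit_operations_syntax

text \<open>Read as a 10-bit number, top entry most significant, a column of \<open>H_KR\<close> turns addition
  over \<open>F_2\<close> into \<open>XOR\<close>, and \<open>F_2^10\<close> into \<open>{0..<1024}\<close>. The theorem then becomes a finite
  check: a table, found by computer search, lists for every \<open>n < 1024\<close> column indices
  \<open>a < b < c\<close> whose numbers XOR to \<open>n\<close>, and the simplifier verifies the table.\<close>

definition column :: "nat \<Rightarrow> nat" where
  "column j = (if j < 10 then 2 ^ (9 - j) else MKR_hex ! (j - 10))"

lemma of_nat_digit_eq_of_bool_bit:
  "(of_nat (x div 2 ^ k mod 2) :: 'a::semiring_1) = of_bool (bit x k)"
  by (simp add: bit_iff_odd mod2_eq_if)

lemma H_KR_eq_bit_column:
  assumes "i < 10"
  shows "H_KR i j = of_bool (bit (column j) (9 - i))"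
proof (cases "j < 10")
  case True
  with assms have "bit (2 ^ (9 - j) :: nat) (9 - i) \<longleftrightarrow> i = j"
    by (auto simp: bit_exp_iff)
  with True show ?thesis
    by (simp add: H_KR_def column_def)
next
  case False
  then show ?thesis
    by (simp add: H_KR_def column_def of_nat_digit_eq_of_bool_bit)
qed

lemma of_bool_bit_xor:
  fixes x y :: "'a::semiring_bit_operations"
  shows "(of_bool (bit (x XOR y) k) :: bit) = of_bool (bit x k) + of_bool (bit y k)"
  by (simp add: bit_xor_iff)

lemma of_bool_eq_one: "of_bool (x = 1) = (x :: bit)"
  by (cases x) simp_all

lemma ex_nat_with_bits:
  "\<exists>n::nat. n < 2 ^ k \<and> (\<forall>i<k. bit n i = P i)"
proof -
  define n :: nat where "n = horner_sum of_bool 2 (map P [0..<k])"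
  have "take_bit k n = n"
    by (simp add: n_def take_bit_horner_sum_bit_eq)
  then have "n < 2 ^ k"
    by (metis take_bit_nat_less_exp)
  moreover have "\<forall>i<k. bit n i = P i"
    by (simp add: n_def bit_horner_sum_bit_iff)
  ultimately show ?thesis
    by blast
qed

fun represents :: "nat \<Rightarrow> nat \<times> nat \<times> nat \<Rightarrow> bool" where
  "represents n (a, b, c) \<longleftrightarrow>
     a < b \<and> b < c \<and> c < 51 \<and> column a XOR column b XOR column c = n"

text \<open>Row \<open>r\<close>, position \<open>k\<close> holds the triple for \<open>n = 32 r + k\<close>. The two-level layout keeps the
  simplifier's work linear in the size of the table.\<close>

definition witnesses :: "(nat \<times> nat \<times> nat) list list" where
  "witnesses =
    [[(0, 6, 33), (1, 10, 41), (0, 28, 29), (0, 1, 21), (4, 5, 34), (0, 15, 27), (0, 13, 22), (0, 30, 33),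
      (0, 34, 44), (0, 9, 33), (0, 8, 33), (0, 16, 23), (0, 7, 33), (0, 2, 36), (0, 17, 46), (0, 4, 20),
      (4, 7, 34), (0, 15, 48), (0, 11, 22), (0, 18, 20), (0, 3, 28), (0, 15, 43), (0, 2, 19), (0, 17, 32),
      (0, 5, 33), (0, 12, 38), (0, 14, 42), (0, 12, 40), (0, 4, 44), (0, 1, 37), (0, 21, 24), (0, 16, 49)],
     [(0, 12, 42), (0, 14, 40), (0, 22, 25), (0, 14, 38), (0, 47, 49), (0, 17, 23), (0, 27, 50), (0, 6, 20),
      (0, 4, 33), (0, 1, 35), (0, 21, 39), (0, 7, 20), (0, 5, 44), (0, 8, 20), (0, 9, 20), (1, 16, 31),
      (0, 23, 47), (0, 17, 49), (0, 48, 50), (0, 30, 44), (0, 3, 26), (0, 26, 31), (0, 43, 50), (0, 10, 22),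
      (0, 7, 44), (0, 16, 32), (0, 36, 41), (0, 19, 45), (0, 33, 34), (0, 9, 44), (0, 8, 44), (0, 5, 20)],
     [(0, 26, 34), (1, 9, 17), (0, 19, 50), (0, 17, 21), (0, 5, 28), (0, 27, 41), (0, 11, 38), (0, 16, 35),
      (0, 3, 33), (0, 31, 33), (0, 24, 32), (0, 45, 48), (0, 23, 39), (0, 12, 22), (0, 1, 46), (0, 25, 42),
      (0, 7, 28), (0, 41, 48), (0, 13, 38), (0, 24, 46), (0, 4, 26), (0, 9, 28), (0, 8, 28), (0, 1, 32),
      (0, 39, 49), (0, 36, 50), (0, 10, 42), (0, 28, 30), (0, 6, 28), (0, 17, 37), (0, 29, 33), (0, 27, 45)],
     [(0, 28, 34), (0, 10, 40), (0, 2, 43), (0, 10, 38), (0, 5, 26), (0, 1, 23), (0, 2, 48), (0, 39, 46),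
      (0, 18, 28), (0, 17, 35), (0, 29, 44), (0, 13, 42), (0, 24, 49), (0, 16, 21), (0, 20, 31), (0, 3, 20),
      (0, 7, 26), (0, 1, 49), (0, 2, 27), (0, 16, 37), (0, 4, 28), (0, 9, 26), (0, 8, 26), (0, 14, 22),
      (0, 23, 24), (0, 20, 29), (0, 15, 36), (0, 26, 30), (0, 3, 44), (0, 31, 44), (0, 32, 39), (0, 11, 42)],
     [(0, 28, 50), (0, 1, 22), (0, 12, 46), (0, 15, 26), (0, 13, 21), (0, 6, 36), (0, 5, 19), (0, 14, 49),
      (0, 2, 33), (0, 7, 36), (0, 25, 35), (0, 41, 44), (0, 9, 36), (1, 12, 31), (0, 11, 37), (0, 8, 36),
      (0, 11, 21), (0, 44, 45), (0, 7, 19), (0, 14, 23), (0, 8, 19), (0, 17, 38), (1, 4, 10), (0, 9, 19),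
      (0, 20, 41), (0, 19, 30), (0, 13, 37), (0, 12, 32), (0, 22, 24), (0, 5, 36), (0, 6, 19), (0, 10, 35)],
     [(0, 21, 25), (0, 14, 32), (0, 3, 43), (0, 15, 28), (0, 27, 29), (0, 33, 45), (0, 3, 48), (0, 31, 48),
      (0, 22, 39), (0, 12, 23), (0, 18, 19), (0, 10, 37), (0, 17, 42), (0, 4, 36), (0, 13, 35), (0, 2, 20),
      (0, 29, 48), (0, 18, 36), (0, 3, 27), (0, 27, 31), (0, 29, 43), (0, 10, 21), (0, 4, 19), (1, 9, 10),
      (0, 14, 46), (0, 16, 40), (0, 11, 35), (0, 16, 38), (0, 2, 44), (0, 12, 49), (0, 25, 37), (0, 33, 41)],
     [(0, 19, 29), (0, 17, 22), (0, 4, 43), (0, 26, 41), (0, 11, 32), (0, 39, 42), (0, 4, 48), (0, 10, 49),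
      (0, 24, 38), (0, 13, 46), (0, 24, 40), (0, 15, 44), (0, 31, 36), (0, 3, 36), (0, 18, 27), (0, 12, 21),
      (0, 13, 32), (0, 12, 37), (0, 4, 27), (0, 10, 23), (0, 2, 28), (0, 1, 38), (0, 3, 19), (0, 1, 40),
      (0, 15, 20), (0, 26, 45), (0, 18, 48), (0, 29, 36), (0, 33, 50), (0, 11, 46), (0, 18, 43), (0, 14, 35)],
     [(0, 8, 43), (0, 10, 32), (0, 5, 27), (0, 9, 43), (0, 8, 48), (0, 12, 35), (0, 7, 43), (0, 9, 48),
      (0, 44, 50), (0, 30, 48), (0, 6, 43), (0, 14, 37), (0, 1, 42), (0, 25, 46), (0, 6, 48), (0, 16, 22),
      (0, 8, 27), (0, 24, 42), (0, 5, 43), (0, 9, 27), (0, 2, 26), (0, 14, 21), (0, 5, 48), (1, 9, 14),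
      (0, 10, 46), (0, 28, 45), (0, 6, 27), (0, 20, 50), (0, 38, 39), (0, 27, 30), (0, 39, 40), (0, 15, 33)],
     [(9, 10, 41), (0, 2, 22), (0, 9, 21), (0, 40, 50), (0, 14, 27), (0, 11, 19), (0, 20, 39), (0, 7, 21),
      (0, 1, 33), (0, 4, 35), (0, 13, 36), (0, 6, 21), (0, 21, 30), (0, 5, 37), (0, 3, 46), (0, 31, 46),
      (0, 14, 48), (0, 13, 19), (0, 30, 37), (0, 5, 21), (0, 14, 43), (0, 6, 37), (0, 31, 32), (0, 3, 32),
      (0, 29, 46), (0, 7, 37), (0, 16, 26), (0, 15, 42), (0, 9, 37), (0, 34, 35), (0, 11, 36), (0, 8, 37)],
     [(0, 10, 19), (0, 6, 35), (0, 15, 38), (0, 4, 21), (0, 23, 31), (0, 3, 23), (0, 30, 35), (0, 29, 49),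
      (0, 9, 35), (0, 34, 37), (0, 12, 48), (0, 8, 35), (0, 22, 45), (0, 7, 35), (0, 12, 43), (0, 1, 20),
      (0, 31, 49), (0, 3, 49), (0, 20, 24), (0, 23, 29), (0, 17, 26), (0, 19, 25), (0, 22, 41), (0, 21, 34),
      (0, 42, 50), (0, 5, 35), (0, 16, 28), (0, 10, 36), (0, 1, 44), (0, 4, 37), (0, 12, 27), (0, 18, 21)],
     [(1, 9, 31), (0, 12, 36), (0, 21, 31), (0, 3, 21), (0, 10, 27), (0, 4, 23), (0, 6, 46), (0, 5, 32),
      (0, 17, 33), (0, 24, 28), (0, 7, 46), (0, 29, 37), (0, 8, 46), (0, 18, 49), (1, 30, 31), (0, 9, 46),
      (0, 10, 48), (0, 4, 49), (0, 16, 44), (0, 7, 32), (0, 1, 28), (0, 2, 38), (0, 9, 32), (0, 2, 40),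
      (0, 30, 32), (0, 18, 23), (0, 12, 19), (0, 41, 42), (0, 31, 37), (0, 3, 37), (0, 5, 46), (0, 6, 32)],
     [(0, 14, 19), (0, 5, 49), (0, 38, 41), (0, 32, 34), (0, 9, 23), (0, 13, 43), (0, 16, 33), (0, 8, 23),
      (0, 31, 35), (0, 3, 35), (0, 23, 30), (0, 18, 32), (0, 2, 42), (0, 6, 23), (0, 4, 46), (0, 17, 20),
      (0, 9, 49), (0, 11, 43), (0, 18, 46), (0, 8, 49), (0, 1, 26), (0, 5, 23), (0, 15, 22), (0, 4, 32),
      (0, 38, 45), (0, 6, 49), (0, 20, 47), (0, 14, 36), (0, 17, 44), (0, 28, 39), (0, 30, 49), (0, 29, 35)],
     [(0, 9, 22), (0, 29, 40), (0, 14, 26), (0, 2, 21), (0, 35, 45), (0, 7, 22), (0, 15, 49), (4, 7, 25),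
      (0, 16, 48), (0, 6, 22), (0, 10, 44), (0, 19, 24), (0, 16, 43), (0, 1, 36), (0, 22, 30), (0, 13, 33),
      (0, 24, 36), (0, 5, 22), (0, 15, 23), (4, 5, 25), (0, 31, 38), (0, 3, 38), (0, 1, 19), (0, 3, 40),
      (0, 12, 28), (0, 10, 20), (0, 46, 50), (0, 11, 33), (0, 16, 27), (0, 2, 37), (0, 35, 41), (0, 25, 44)],
     [(0, 15, 32), (0, 4, 22), (0, 14, 28), (1, 14, 47), (0, 36, 39), (0, 49, 50), (0, 17, 48), (0, 27, 47),
      (0, 13, 20), (0, 2, 35), (0, 37, 41), (0, 25, 33), (0, 3, 42), (0, 31, 42), (0, 21, 45), (0, 11, 44),
      (0, 37, 45), (0, 23, 50), (0, 17, 27), (0, 47, 48), (0, 21, 41), (0, 22, 34), (1, 9, 41), (0, 43, 47),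
      (0, 12, 26), (0, 15, 46), (0, 29, 42), (0, 13, 44), (0, 11, 20), (0, 18, 22), (0, 10, 33), (0, 19, 39)],
     [(0, 22, 31), (0, 3, 22), (0, 10, 26), (0, 19, 47), (0, 12, 33), (0, 5, 38), (0, 41, 49), (0, 5, 40),
      (0, 23, 45), (0, 37, 50), (0, 14, 44), (0, 39, 43), (0, 4, 42), (0, 17, 36), (0, 2, 46), (0, 39, 48),
      (0, 18, 42), (0, 7, 38), (0, 23, 41), (0, 7, 40), (0, 9, 38), (0, 8, 40), (0, 9, 40), (0, 2, 32),
      (0, 30, 40), (0, 14, 20), (0, 30, 38), (0, 27, 39), (0, 45, 49), (0, 6, 38), (0, 15, 35), (0, 6, 40)],
     [(0, 32, 41), (0, 34, 38), (0, 1, 43), (0, 12, 20), (0, 6, 42), (0, 2, 23), (0, 1, 48), (0, 11, 26),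
      (0, 7, 42), (0, 18, 38), (0, 15, 37), (0, 18, 40), (1, 31, 45), (0, 9, 42), (0, 8, 42), (0, 24, 27),
      (0, 12, 44), (0, 2, 49), (0, 1, 27), (0, 13, 26), (0, 15, 21), (0, 4, 38), (1, 9, 15), (0, 4, 40),
      (0, 16, 19), (0, 41, 46), (0, 32, 45), (0, 24, 48), (0, 5, 42), (0, 35, 50), (0, 14, 33), (0, 24, 43)],
     [(2, 28, 50), (0, 3, 31), (0, 38, 40), (0, 8, 9), (0, 43, 48), (0, 7, 9), (0, 7, 8), (0, 6, 30),
      (0, 18, 34), (0, 6, 9), (0, 6, 8), (0, 7, 30), (0, 6, 7), (0, 8, 30), (0, 9, 30), (1, 31, 46),
      (0, 27, 43), (0, 5, 9), (0, 5, 8), (0, 20, 44), (0, 4, 34), (0, 10, 25), (0, 3, 29), (0, 29, 31),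
      (0, 5, 6), (0, 32, 46), (0, 41, 45), (0, 19, 36), (0, 4, 18), (0, 1, 24), (0, 21, 37), (0, 5, 30)],
     [(0, 26, 28), (0, 4, 9), (0, 4, 8), (0, 15, 50), (0, 4, 7), (0, 10, 11), (0, 32, 49), (0, 20, 33),
      (0, 4, 6), (0, 1, 39), (0, 21, 35), (0, 23, 46), (0, 5, 18), (0, 2, 45), (0, 16, 17), (0, 4, 30),
      (0, 4, 5), (0, 10, 13), (0, 23, 32), (0, 18, 30), (0, 6, 18), (0, 9, 34), (0, 8, 34), (0, 2, 41),
      (0, 7, 18), (0, 38, 42), (0, 12, 14), (0, 16, 47), (0, 6, 34), (0, 9, 18), (0, 8, 18), (0, 46, 49)],
     [(0, 1, 17), (0, 3, 9), (0, 3, 8), (0, 8, 31), (0, 3, 7), (0, 7, 31), (0, 5, 29), (0, 16, 39),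
      (0, 3, 6), (0, 6, 31), (0, 32, 37), (0, 12, 13), (0, 23, 35), (0, 21, 46), (0, 30, 31), (0, 3, 30),
      (0, 3, 5), (0, 5, 31), (0, 7, 29), (0, 37, 46), (0, 2, 50), (0, 1, 47), (0, 22, 40), (0, 9, 29),
      (0, 35, 49), (0, 29, 30), (0, 15, 45), (0, 20, 26), (0, 28, 33), (0, 17, 24), (0, 6, 29), (0, 11, 12)],
     [(0, 3, 4), (0, 4, 31), (0, 29, 34), (0, 41, 50), (0, 19, 27), (0, 11, 14), (0, 21, 23), (0, 35, 46),
      (0, 28, 44), (0, 17, 39), (0, 18, 29), (0, 36, 48), (0, 37, 49), (0, 22, 42), (0, 1, 16), (0, 12, 25),
      (0, 19, 48), (0, 13, 14), (0, 21, 49), (0, 16, 24), (0, 3, 34), (0, 31, 34), (0, 4, 29), (0, 2, 15),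
      (0, 23, 37), (0, 45, 50), (0, 10, 12), (0, 20, 28), (0, 3, 18), (0, 18, 31), (0, 32, 35), (0, 27, 36)],
     [(0, 32, 40), (0, 2, 9), (0, 2, 8), (0, 34, 41), (0, 2, 7), (0, 33, 36), (0, 26, 27), (0, 1, 13),
      (0, 2, 6), (0, 23, 42), (0, 25, 39), (0, 18, 41), (0, 12, 17), (0, 4, 45), (0, 11, 24), (0, 2, 30),
      (0, 2, 5), (0, 18, 45), (0, 26, 48), (0, 1, 11), (0, 3, 50), (0, 31, 50), (0, 26, 43), (0, 4, 41),
      (0, 14, 16), (0, 12, 47), (0, 13, 24), (0, 38, 46), (0, 22, 37), (0, 42, 49), (0, 19, 33), (0, 10, 39)],
     [(0, 2, 4), (0, 15, 29), (0, 12, 16), (0, 1, 25), (0, 38, 49), (0, 6, 45), (0, 27, 28), (0, 5, 41),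
      (0, 22, 35), (0, 7, 45), (0, 19, 44), (0, 10, 24), (0, 9, 45), (1, 31, 42), (0, 13, 39), (0, 8, 45),
      (0, 23, 38), (0, 36, 44), (0, 23, 40), (0, 7, 41), (0, 2, 34), (0, 8, 41), (0, 1, 10), (0, 3, 15),
      (0, 30, 41), (0, 19, 20), (0, 11, 39), (0, 32, 42), (0, 2, 18), (0, 5, 45), (0, 24, 25), (0, 6, 41)],
     [(0, 2, 3), (0, 2, 31), (0, 19, 28), (0, 15, 34), (0, 5, 50), (0, 35, 42), (0, 11, 47), (0, 13, 17),
      (0, 37, 38), (0, 20, 48), (0, 37, 40), (0, 15, 18), (0, 1, 12), (0, 16, 25), (0, 27, 44), (0, 22, 46),
      (0, 7, 50), (0, 12, 24), (0, 13, 47), (0, 11, 17), (0, 21, 40), (0, 9, 50), (0, 2, 29), (0, 4, 15),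
      (0, 10, 16), (0, 28, 36), (0, 44, 48), (0, 30, 50), (0, 6, 50), (0, 20, 27), (0, 43, 44), (0, 14, 39)],
     [(0, 34, 50), (0, 29, 41), (0, 19, 26), (0, 10, 47), (0, 22, 23), (0, 12, 39), (4, 23, 25), (0, 5, 15),
      (0, 18, 50), (0, 13, 16), (0, 33, 43), (0, 14, 24), (0, 31, 45), (0, 3, 45), (0, 33, 48), (0, 21, 42),
      (0, 22, 49), (0, 37, 42), (4, 25, 49), (0, 7, 15), (0, 4, 50), (0, 8, 15), (0, 1, 14), (0, 3, 41),
      (0, 15, 30), (0, 26, 36), (0, 27, 33), (0, 29, 45), (0, 35, 38), (0, 11, 16), (0, 35, 40), (0, 6, 15)],
     [(0, 3, 17), (0, 1, 9), (0, 1, 8), (0, 28, 32), (0, 1, 7), (0, 26, 49), (0, 20, 35), (0, 2, 13),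
      (0, 1, 6), (0, 4, 39), (0, 42, 48), (0, 21, 33), (0, 22, 36), (0, 5, 24), (0, 25, 45), (0, 1, 30),
      (0, 1, 5), (0, 23, 26), (0, 24, 30), (0, 2, 11), (0, 25, 41), (0, 3, 47), (0, 17, 29), (0, 19, 22),
      (0, 12, 50), (0, 7, 24), (0, 28, 46), (0, 10, 45), (0, 9, 24), (0, 34, 39), (0, 27, 42), (0, 8, 24)],
     [(0, 1, 4), (0, 6, 39), (0, 14, 50), (0, 2, 25), (0, 11, 41), (0, 27, 40), (0, 30, 39), (0, 27, 38),
      (0, 9, 39), (0, 24, 34), (0, 13, 45), (0, 8, 39), (0, 20, 21), (0, 7, 39), (0, 3, 16), (0, 16, 31),
      (0, 13, 41), (0, 23, 28), (0, 20, 37), (0, 38, 48), (0, 1, 34), (0, 40, 43), (0, 2, 10), (0, 38, 43),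
      (0, 16, 29), (0, 5, 39), (0, 26, 46), (0, 12, 15), (0, 1, 18), (0, 4, 24), (0, 11, 45), (0, 21, 44)],
     [(0, 1, 3), (0, 1, 31), (0, 8, 17), (0, 19, 38), (0, 7, 17), (0, 5, 47), (0, 33, 46), (0, 11, 50),
      (0, 6, 17), (0, 28, 37), (0, 20, 23), (0, 24, 29), (0, 2, 12), (0, 44, 49), (0, 4, 16), (0, 17, 30),
      (0, 5, 17), (0, 7, 47), (0, 16, 18), (0, 13, 50), (0, 9, 47), (1, 9, 28), (0, 1, 29), (0, 8, 47),
      (0, 36, 38), (0, 23, 44), (0, 16, 34), (0, 14, 45), (0, 24, 31), (0, 3, 24), (0, 20, 49), (0, 32, 33)],
     [(0, 4, 17), (0, 12, 45), (0, 10, 50), (0, 22, 43), (0, 11, 15), (4, 25, 48), (0, 6, 16), (0, 22, 48),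
      (0, 31, 39), (0, 3, 39), (0, 7, 16), (0, 32, 44), (0, 8, 16), (0, 23, 33), (1, 20, 31), (0, 9, 16),
      (0, 13, 15), (4, 23, 34), (0, 44, 46), (0, 22, 27), (0, 17, 34), (0, 4, 47), (0, 2, 14), (0, 21, 26),
      (0, 20, 32), (0, 33, 49), (0, 19, 42), (0, 12, 41), (0, 17, 18), (0, 28, 35), (0, 5, 16), (0, 29, 39)],
     [(0, 1, 2), (0, 28, 38), (0, 10, 34), (0, 4, 25), (0, 39, 45), (0, 8, 13), (0, 9, 13), (0, 23, 43),
      (0, 13, 30), (0, 22, 33), (0, 10, 18), (0, 19, 37), (0, 3, 12), (0, 12, 31), (0, 21, 36), (0, 6, 13),
      (0, 36, 37), (0, 8, 11), (0, 9, 11), (0, 43, 49), (0, 17, 50), (0, 19, 21), (0, 4, 10), (0, 5, 13),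
      (0, 26, 42), (0, 15, 16), (0, 12, 29), (0, 6, 11), (0, 11, 30), (0, 2, 24), (0, 39, 41), (0, 18, 25)],
     [(0, 14, 29), (0, 8, 25), (0, 9, 25), (0, 26, 40), (0, 35, 36), (0, 27, 32), (0, 5, 10), (0, 4, 13),
      (0, 46, 48), (0, 2, 39), (0, 24, 41), (0, 6, 25), (0, 25, 30), (0, 1, 45), (0, 20, 22), (0, 11, 18),
      (0, 24, 45), (0, 32, 48), (0, 7, 10), (0, 4, 11), (0, 8, 10), (0, 32, 43), (0, 3, 14), (0, 1, 41),
      (0, 28, 42), (0, 10, 30), (0, 16, 50), (0, 13, 18), (0, 27, 46), (0, 22, 44), (0, 6, 10), (0, 19, 35)],
     [(0, 2, 17), (0, 19, 32), (0, 14, 34), (0, 12, 30), (0, 6, 12), (0, 11, 29), (0, 13, 31), (0, 3, 13),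
      (0, 7, 12), (0, 24, 50), (0, 14, 18), (0, 35, 43), (1, 31, 36), (0, 9, 12), (0, 8, 12), (0, 35, 48),
      (0, 42, 44), (0, 13, 29), (0, 11, 31), (0, 3, 11), (0, 1, 50), (0, 2, 47), (0, 4, 14), (1, 19, 31),
      (0, 19, 46), (0, 16, 41), (0, 32, 36), (0, 27, 35), (0, 5, 12), (0, 33, 38), (0, 15, 39), (0, 33, 40)],
     [(0, 10, 29), (0, 21, 43), (0, 25, 31), (0, 3, 25), (0, 33, 42), (0, 21, 48), (0, 5, 14), (0, 19, 49),
      (0, 23, 36), (0, 38, 44), (0, 15, 24), (0, 40, 44), (0, 4, 12), (0, 17, 45), (0, 2, 16), (0, 27, 37),
      (0, 12, 18), (0, 21, 27), (0, 7, 14), (0, 19, 23), (0, 8, 14), (0, 22, 26), (0, 3, 10), (0, 1, 15),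
      (0, 12, 34), (0, 14, 30), (0, 20, 38), (0, 37, 48), (0, 36, 49), (0, 39, 50), (0, 6, 14), (0, 37, 43)]]"

definition witness :: "nat \<Rightarrow> nat \<times> nat \<times> nat" where
  "witness n = witnesses ! (n div 32) ! (n mod 32)"

lemma witnesses_represent:
  "list_all2 (\<lambda>r row. list_all2 (\<lambda>k. represents (32 * r + k)) [0..<32] row)
     [0..<32] witnesses"
  by (simp add: witnesses_def column_def MKR_hex_def upt_rec)

lemma witness_represents:
  assumes "n < 1024"
  shows "represents n (witness n)"
proof -
  have row: "represents (32 * r + k) (witnesses ! r ! k)" if "r < 32" "k < 32" for r k
    using list_all2_nthD [OF list_all2_nthD [OF witnesses_represent]] that by simp
  have "n div 32 < 32" "n mod 32 < 32"
    using assms by simp_all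
  then have "represents (32 * (n div 32) + n mod 32) (witness n)"
    unfolding witness_def by (rule row)
  then show ?thesis
    unfolding mult_div_mod_eq .
qed

theorem lemma7p4:
  fixes v :: "nat \<Rightarrow> bit"
  shows "\<exists>a b c. a < 51 \<and> b < 51 \<and> c < 51 \<and> a \<noteq> b \<and> a \<noteq> c \<and> b \<noteq> c \<and>
           (\<forall>i<10. v i = H_KR i a + H_KR i b + H_KR i c)"
proof -
  obtain n :: nat where "n < 2 ^ 10" and bits: "\<forall>i<10. bit n i \<longleftrightarrow> v (9 - i) = 1"
    using ex_nat_with_bits [of 10 "\<lambda>i. v (9 - i) = 1"] by blast
  obtain a b c where "witness n = (a, b, c)"
    by (cases "witness n")
  with witness_represents [of n] \<open>n < 2 ^ 10\<close>
  have "a < b" "b < c" "c < 51" and xor_eq: "column a XOR column b XOR column c = n"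
    by simp_all
  have "v i = H_KR i a + H_KR i b + H_KR i c" if "i < 10" for i
  proof -
    have "v i = of_bool (bit n (9 - i))"
      using bits that by (simp add: of_bool_eq_one)
    also have "\<dots> = of_bool (bit (column a) (9 - i)) + of_bool (bit (column b) (9 - i))
        + of_bool (bit (column c) (9 - i))"
      unfolding xor_eq [symmetric] of_bool_bit_xor add.assoc ..
    also have "\<dots> = H_KR i a + H_KR i b + H_KR i c"
      using that by (simp only: H_KR_eq_bit_column)
    finally show ?thesis .
  qed
  with \<open>a < b\<close> \<open>b < c\<close> \<open>c < 51\<close> show ?thesis
    by (intro exI [of _ a] exI [of _ b] exI [of _ c]) auto
qed

end
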